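(* Let $B$ be a UFD and $A$ a subring of $B$. Then the following are equivalent: (I) $A$ is a retract of $B$ and $A=B^{\phi}$ for some $\phi\in\operatorname{Exp}_A(B)$ with $\phi\neq\mathrm{Id}$; (II) $B=A^{[1]}$, i.e. $B=A[T]$ for some $T\in B$ transcendental over $A$. In particular, if $R$ is a UFD and $A$ is an $R$-subalgebra of the polynomial ring $B=R[X_1,\dots,X_n]$ satisfying (I), then $B=A^{[1]}$.
   Context: A subring $A$ of a ring $B$ is a retract of $B$ if there is an idempotent ring endomorphism $\pi:B\to B$ with $\pi(B)=A$. For a ring $B$ and an indeterminate $U$, an exponential map on $B$ over a subring $C$ is a $C$-algebra homomorphism $\phi_U:B\to B[U]$ such that composing with evaluation at $U=0$ gives the identity on $B$ and $\phi_V\phi_U=\phi_{V+U}$ (with $\phi_V$ extended to $B[U]\to B[V,U]$ by $\phi_V(U)=U$). $\operatorname{Exp}_C(B)$ denotes the set of these; $B^{\phi}=\{b\in B:\phi(b)=b\}$ is the ring of invariants. *)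

theory Defs
  imports "HOL-Computational_Algebra.Polynomial" "HOL-Computational_Algebra.Factorial_Ring"
begin

definition is_subring :: "'b::comm_ring_1 set \<Rightarrow> bool" where
  "is_subring A \<longleftrightarrow> 0 \<in> A \<and> 1 \<in> A \<and>
     (\<forall>x\<in>A. \<forall>y\<in>A. x + y \<in> A \<and> x - y \<in> A \<and> x * y \<in> A)"

definition is_ring_hom :: "('a::comm_ring_1 \<Rightarrow> 'c::comm_ring_1) \<Rightarrow> bool" where
  "is_ring_hom f \<longleftrightarrow> f 0 = 0 \<and> f 1 = 1 \<and>
     (\<forall>x y. f (x + y) = f x + f y \<and> f (x * y) = f x * f y)"

definition is_retract :: "'b::comm_ring_1 set \<Rightarrow> bool" where
  "is_retract A \<longleftrightarrow> (\<exists>\<pi>::'b \<Rightarrow> 'b. is_ring_hom \<pi> \<and> \<pi> \<circ> \<pi> = \<pi> \<and> range \<pi> = A)"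

text \<open>The element
  \<open>\<phi>_V(\<phi>_U(b)) \<in> B[V,U]\<close> is represented in \<open>(B[V])[U]\<close> (type \<open>'b poly poly\<close>, outer
  variable \<open>U\<close>, inner variable \<open>V\<close>) as \<open>map_poly \<phi> (\<phi> b)\<close>; and \<open>\<phi>_{V+U}(b)\<close> is \<open>\<phi>_U(b)\<close>
  with coefficients regarded as constants and \<open>U\<close> substituted by \<open>V + U\<close>.\<close>
definition exp_maps :: "'b::comm_ring_1 set \<Rightarrow> ('b \<Rightarrow> 'b poly) set" where
  "exp_maps C = {\<phi>. is_ring_hom \<phi> \<and> (\<forall>c\<in>C. \<phi> c = [:c:]) \<and>
       (\<forall>b. poly (\<phi> b) 0 = b) \<and>
       (\<forall>b. map_poly \<phi> (\<phi> b) =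
              poly (map_poly (\<lambda>c. [:[:c:]:]) (\<phi> b)) [:[:0, 1:], 1:])}"

definition invariants :: "('b::comm_ring_1 \<Rightarrow> 'b poly) \<Rightarrow> 'b set" where
  "invariants \<phi> = {b. \<phi> b = [:b:]}"

definition polys_over :: "'b::comm_ring_1 set \<Rightarrow> 'b poly set" where
  "polys_over A = {p. \<forall>i. coeff p i \<in> A}"

definition is_poly_ring_in_one_var_over :: "'b::comm_ring_1 set \<Rightarrow> bool" where
  "is_poly_ring_in_one_var_over A \<longleftrightarrow> (\<exists>T::'b.
      (\<forall>b. \<exists>p\<in>polys_over A. b = poly p T) \<and>
      (\<forall>p\<in>polys_over A. poly p T = 0 \<longrightarrow> p = 0))"

end

theory Submission
  imports Defs
begin

text \<open>
  (I) \<Longrightarrow> (II): let \<open>d\<close> be the least positive \<open>\<phi>\<close>-degree \<open>deg b = degree (\<phi> b)\<close>.  Comparing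
  coefficients in \<open>\<phi>\<^sub>V \<phi>\<^sub>U = \<phi>\<^sub>V\<^sub>+\<^sub>U\<close> shows that the coefficients of \<open>\<phi> b\<close> have smaller
  \<open>\<phi>\<close>-degree, with binomial coefficients appearing in the top terms; hence leading coefficients
  are invariant and \<open>(deg b choose j) = 0\<close> for \<open>0 < j < d\<close>, which forces \<open>d dvd deg b\<close>.
  Choose \<open>t\<close> of degree \<open>d\<close> in the kernel of the retraction \<open>\<pi>\<close>, with the fewest prime factors.
  Subtracting invariant multiples of powers of \<open>t\<close> lowers degrees, so every \<open>b\<close> has a nonzero
  invariant multiple in \<open>A[t]\<close>.  An invariant prime \<open>p\<close> cannot divide \<open>t\<close> (minimality), and
  applying \<open>\<pi>\<close> to \<open>p y = a + t g(t)\<close> shows \<open>p dvd a\<close>; so such primes cancel and \<open>b \<in> A[t]\<close>.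
  Finally \<open>\<phi> (g(t))\<close> has positive degree for nonconstant \<open>g\<close>, so \<open>t\<close> is transcendental.

  (II) \<Longrightarrow> (I): the retraction is \<open>T \<mapsto> 0\<close> and the exponential map is \<open>g(T) \<mapsto> g(T + U)\<close>.
\<close>

lemma is_ring_homD:
  assumes "is_ring_hom f"
  shows "f 0 = 0" "f 1 = 1" "f (x + y) = f x + f y" "f (x * y) = f x * f y"
  using assms unfolding is_ring_hom_def by auto

lemma is_ring_hom_uminus:
  assumes "is_ring_hom f" shows "f (- x) = - f x"
proof -
  have "f (- x) + f x = 0" using is_ring_homD[OF assms] by (metis add.commute add.right_inverse)
  then show ?thesis by (simp add: eq_neg_iff_add_eq_0)
qed

lemma is_ring_hom_diff:
  assumes "is_ring_hom f" shows "f (x - y) = f x - f y"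
  using is_ring_homD[OF assms] is_ring_hom_uminus[OF assms] by (metis diff_conv_add_uminus)

lemma is_ring_hom_power:
  assumes "is_ring_hom f" shows "f (x ^ n) = f x ^ n"
  by (induction n) (simp_all add: is_ring_homD[OF assms])

lemma is_ring_hom_const_poly: "is_ring_hom (\<lambda>c::'a::comm_ring_1. [:c:])"
  unfolding is_ring_hom_def by (simp add: one_pCons)

lemma is_ring_hom_map_poly:
  fixes f :: "'a::comm_ring_1 \<Rightarrow> 'c::comm_ring_1"
  assumes "is_ring_hom f"
  shows "is_ring_hom (map_poly f)"
proof -
  note f = is_ring_homD[OF assms]
  have add: "map_poly f (p + q) = map_poly f p + map_poly f q" for p q
    by (rule poly_eqI) (simp add: coeff_map_poly f)
  have mult: "map_poly f (p * q) = map_poly f p * map_poly f q" for p q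
  proof (induction p)
    case (pCons a p)
    have "map_poly f (smult a q) = smult (f a) (map_poly f q)"
      by (rule poly_eqI) (simp add: coeff_map_poly f)
    then show ?case
      by (simp add: add pCons.IH map_poly_pCons f)
  qed simp
  show ?thesis
    unfolding is_ring_hom_def using add mult f by simp
qed

lemma map_poly_pcompose_hom:
  assumes "is_ring_hom f"
  shows "map_poly f (pcompose p q) = pcompose (map_poly f p) (map_poly f q)"
proof (induction p)
  case (pCons a p)
  note f = is_ring_homD[OF assms] and F = is_ring_homD[OF is_ring_hom_map_poly[OF assms]]
  show ?case
    by (simp add: pcompose_pCons map_poly_pCons f F pCons.IH)
qed simp

subsection \<open>Vanishing binomial coefficients\<close>

lemma one_plus_X_power_eq:
  fixes d :: nat
  assumes "\<forall>j. 0 < j \<and> j < d \<longrightarrow> of_nat (d choose j) = (0::'a::comm_ring_1)" and "0 < d"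
  shows "[:1, 1::'a:] ^ d = 1 + monom 1 d"
proof (rule poly_eqI)
  fix i
  show "coeff ([:1, 1::'a:] ^ d) i = coeff (1 + monom 1 d) i"
  proof (cases "i \<le> d")
    case True
    then show ?thesis using assms coeff_linear_poly_power[OF True, of "1::'a" 1]
      by (cases "i = 0"; cases "i = d") auto
  next
    case False
    then have "coeff ([:1, 1::'a:] ^ d) i = 0"
      by (intro coeff_eq_0) (simp add: degree_linear_power)
    then show ?thesis using False by auto
  qed
qed

lemma power_one_plus_monom:
  "\<exists>g. (1 + monom (1::'a::comm_ring_1) d) ^ q = 1 + monom 1 d * g"
proof (induction q)
  case (Suc q)
  then obtain g where g: "(1 + monom (1::'a) d) ^ q = 1 + monom 1 d * g" by blast
  have "(1 + monom (1::'a) d) ^ Suc q = 1 + monom 1 d * (1 + g + monom 1 d * g)"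
    by (simp add: g algebra_simps)
  then show ?case by blast
qed (intro exI[of _ 0], simp)

text \<open>
  If \<open>(1 + X)^d = 1 + X^d\<close>, then writing \<open>e = d q + r\<close> with \<open>0 < r < d\<close> gives
  \<open>(1 + X)^e \<equiv> (1 + X)^r (mod X^d)\<close>, whose coefficient at \<open>X^r\<close> is \<open>1\<close>.
\<close>
lemma dvd_if_binomials_vanish:
  fixes d e :: nat
  assumes "0 < d"
    and d: "\<forall>j. 0 < j \<and> j < d \<longrightarrow> of_nat (d choose j) = (0::'a::comm_ring_1)"
    and e: "\<forall>j. 0 < j \<and> j < d \<longrightarrow> of_nat (e choose j) = (0::'a)"
  shows "d dvd e"
proof (rule ccontr)
  assume "\<not> d dvd e"
  define r where "r = e mod d"
  define q where "q = e div d"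
  have r: "0 < r" "r < d" using \<open>\<not> d dvd e\<close> \<open>0 < d\<close> by (auto simp: r_def dvd_eq_mod_eq_0)
  have e_eq: "e = d * q + r" by (simp add: r_def q_def)
  obtain g where g: "(1 + monom (1::'a) d) ^ q = 1 + monom 1 d * g"
    using power_one_plus_monom by blast
  have "[:1, 1::'a:] ^ e = ([:1, 1:] ^ d) ^ q * [:1, 1:] ^ r"
    by (simp add: e_eq power_add power_mult)
  also have "\<dots> = [:1, 1:] ^ r + monom 1 d * (g * [:1, 1:] ^ r)"
    by (simp add: one_plus_X_power_eq[OF d \<open>0 < d\<close>] g algebra_simps)
  finally have "coeff ([:1, 1::'a:] ^ e) r = 1"
    using r by (simp add: coeff_monom_mult coeff_linear_poly_power)
  then have "of_nat (e choose r) = (1::'a)"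
    using coeff_linear_poly_power[of r e "1::'a" 1] e_eq by simp
  with e r show False by auto
qed

lemma subring_sum: "is_subring A \<Longrightarrow> (\<And>i. i \<in> S \<Longrightarrow> f i \<in> A) \<Longrightarrow> sum f S \<in> A"
  by (induction S rule: infinite_finite_induct) (auto simp: is_subring_def)

lemma polys_over_pCons_iff: "pCons a p \<in> polys_over A \<longleftrightarrow> a \<in> A \<and> p \<in> polys_over A"
  by (auto simp: polys_over_def coeff_pCons split: nat.splits)

lemma coeff_in_polys_over: "p \<in> polys_over A \<Longrightarrow> coeff p i \<in> A"
  by (simp add: polys_over_def)

context
  fixes A :: "'a::comm_ring_1 set"
  assumes A: "is_subring A"
begin

lemma const_in_polys_over: "a \<in> A \<Longrightarrow> [:a:] \<in> polys_over A"
  using A by (auto simp: polys_over_def coeff_pCons is_subring_def split: nat.splits)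

lemma monom_in_polys_over: "a \<in> A \<Longrightarrow> monom a n \<in> polys_over A"
  using A by (auto simp: polys_over_def is_subring_def)

lemma smult_in_polys_over: "a \<in> A \<Longrightarrow> p \<in> polys_over A \<Longrightarrow> smult a p \<in> polys_over A"
  using A by (auto simp: polys_over_def is_subring_def)

lemma polys_over_add: "p \<in> polys_over A \<Longrightarrow> q \<in> polys_over A \<Longrightarrow> p + q \<in> polys_over A"
  using A by (auto simp: polys_over_def is_subring_def)

lemma polys_over_diff: "p \<in> polys_over A \<Longrightarrow> q \<in> polys_over A \<Longrightarrow> p - q \<in> polys_over A"
  using A by (auto simp: polys_over_def is_subring_def)

lemma polys_over_mult:
  assumes "p \<in> polys_over A" "q \<in> polys_over A"
  shows "p * q \<in> polys_over A"
proof -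
  have "(\<Sum>i\<le>n. coeff p i * coeff q (n - i)) \<in> A" for n
    using A assms by (intro subring_sum) (auto simp: polys_over_def is_subring_def)
  then show ?thesis by (simp add: polys_over_def coeff_mult)
qed

end

subsection \<open>Exponential maps\<close>

text \<open>
  Coefficient \<open>i\<close> (in \<open>U\<close>) of \<open>p(V + U)\<close>; this is the right-hand side of the composition law.
\<close>
lemma coeff_shifted_poly:
  fixes p :: "'a::comm_ring_1 poly"
  shows "coeff (poly (map_poly (\<lambda>c. [:[:c:]:]) p) [:[:0, 1:], 1:]) i =
     (\<Sum>j\<le>degree p. monom (coeff p j * of_nat (j choose i)) (j - i))"
proof -
  define M where "M = map_poly (\<lambda>c. [:[:c:]:]) p"
  have "degree M = degree p"
    unfolding M_def by (cases "p = 0") (simp_all add: map_poly_degree_eq)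
  moreover have "coeff M j = [:[:coeff p j:]:]" for j by (simp add: M_def coeff_map_poly)
  ultimately have "coeff (poly M [:[:0, 1:], 1:]) i =
      (\<Sum>j\<le>degree p. [:coeff p j:] * coeff ([:[:0, 1:], 1:] ^ j) i)"
    by (simp add: poly_altdef coeff_sum)
  also have "\<dots> = (\<Sum>j\<le>degree p. monom (coeff p j * of_nat (j choose i)) (j - i))"
  proof (rule sum.cong[OF refl])
    fix j
    show "[:coeff p j:] * coeff ([:[:0, 1:], 1:] ^ j) i = monom (coeff p j * of_nat (j choose i)) (j - i)"
    proof (cases "i \<le> j")
      case True
      then show ?thesis
        by (simp add: coeff_linear_poly_power monom_altdef of_nat_poly mult.commute)
    next
      case False
      then have "coeff ([:[:0, 1:], 1:] ^ j) i = (0 :: 'a poly)"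
        by (intro coeff_eq_0) (simp add: degree_linear_power)
      with False show ?thesis by (simp add: binomial_eq_0)
    qed
  qed
  finally show ?thesis by (simp add: M_def)
qed

locale exp_map =
  fixes \<phi> :: "'b::idom \<Rightarrow> 'b poly"
  assumes ring_hom: "is_ring_hom \<phi>"
    and eval_0: "\<And>b. poly (\<phi> b) 0 = b"
    and composition: "\<And>b. map_poly \<phi> (\<phi> b) = poly (map_poly (\<lambda>c. [:[:c:]:]) (\<phi> b)) [:[:0, 1:], 1:]"
begin

abbreviation deg :: "'b \<Rightarrow> nat" where "deg b \<equiv> degree (\<phi> b)"

lemmas hom_simps = is_ring_homD[OF ring_hom] is_ring_hom_diff[OF ring_hom]
  is_ring_hom_uminus[OF ring_hom] is_ring_hom_power[OF ring_hom]

lemma eq_0_iff: "\<phi> b = 0 \<longleftrightarrow> b = 0"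
  using eval_0[of b] by (auto simp: hom_simps)

lemma apply_invariant: "b \<in> invariants \<phi> \<Longrightarrow> \<phi> b = [:b:]"
  by (simp add: invariants_def)

lemma invariant_iff_deg_0: "b \<in> invariants \<phi> \<longleftrightarrow> deg b = 0"
proof
  assume "deg b = 0"
  then obtain a where a: "\<phi> b = [:a:]" by (rule degree_eq_zeroE)
  with eval_0[of b] show "b \<in> invariants \<phi>" by (simp add: invariants_def)
qed (simp add: invariants_def)

lemma subring_invariants: "is_subring (invariants \<phi>)"
  by (auto simp: is_subring_def invariants_def hom_simps one_pCons)

lemma invariant_power: "a \<in> invariants \<phi> \<Longrightarrow> a ^ n \<in> invariants \<phi>"
  by (simp add: invariants_def hom_simps poly_const_pow)

lemma deg_mult: "x \<noteq> 0 \<Longrightarrow> y \<noteq> 0 \<Longrightarrow> deg (x * y) = deg x + deg y"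
  by (simp add: hom_simps eq_0_iff degree_mult_eq)

lemma invariant_factor: "x * y \<in> invariants \<phi> \<Longrightarrow> x * y \<noteq> 0 \<Longrightarrow> x \<in> invariants \<phi>"
  using deg_mult[of x y] by (auto simp: invariant_iff_deg_0)

lemma apply_coeff:
  "\<phi> (coeff (\<phi> b) i) = (\<Sum>j\<le>deg b. monom (coeff (\<phi> b) j * of_nat (j choose i)) (j - i))"
proof -
  have "\<phi> (coeff (\<phi> b) i) = coeff (map_poly \<phi> (\<phi> b)) i"
    by (simp add: coeff_map_poly hom_simps)
  then show ?thesis using composition[of b] coeff_shifted_poly[of "\<phi> b" i] by simp
qed

lemma deg_coeff_le: "deg (coeff (\<phi> b) i) \<le> deg b - i"
  unfolding apply_coeff
  by (rule degree_sum_le) (auto intro: order.trans[OF degree_monom_le])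

lemma lead_coeff_invariant: "lead_coeff (\<phi> b) \<in> invariants \<phi>"
  using deg_coeff_le[of b "deg b"] by (simp add: invariant_iff_deg_0)

lemma coeff_apply_coeff_top:
  assumes "i \<le> deg b"
  shows "coeff (\<phi> (coeff (\<phi> b) i)) (deg b - i) = of_nat (deg b choose i) * lead_coeff (\<phi> b)"
proof -
  have "(if j - i = deg b - i then coeff (\<phi> b) j * of_nat (j choose i) else 0) =
        (if j = deg b then lead_coeff (\<phi> b) * of_nat (deg b choose i) else 0)" if "j \<le> deg b" for j
  proof (cases "j = deg b \<or> j < i")
    case False
    then have "j - i \<noteq> deg b - i" using that assms by auto
    with False show ?thesis by simp
  qed (auto simp: binomial_eq_0)
  then have "coeff (\<phi> (coeff (\<phi> b) i)) (deg b - i) =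
      (\<Sum>j\<le>deg b. if j = deg b then lead_coeff (\<phi> b) * of_nat (deg b choose i) else 0)"
    unfolding apply_coeff coeff_sum by (intro sum.cong) auto
  then show ?thesis by (simp add: mult.commute)
qed

end

locale nontrivial_exp_map = exp_map \<phi> for \<phi> :: "'b::idom \<Rightarrow> 'b poly" +
  assumes nontrivial: "\<phi> \<noteq> (\<lambda>b. [:b:])"
begin

lemma ex_deg_pos: "\<exists>b. 0 < deg b"
  using nontrivial invariant_iff_deg_0 by (auto simp: invariants_def)

definition min_deg :: nat where "min_deg = (LEAST n. 0 < n \<and> (\<exists>b. deg b = n))"

lemma min_deg_pos: "0 < min_deg" and min_deg_attained: "\<exists>b. deg b = min_deg"
  using LeastI_ex[of "\<lambda>n. 0 < n \<and> (\<exists>b. deg b = n)"] ex_deg_pos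
  unfolding min_deg_def by auto

lemma min_deg_le: "0 < deg b \<Longrightarrow> min_deg \<le> deg b"
  unfolding min_deg_def by (rule Least_le) blast

text \<open>
  The coefficient \<open>coeff (\<phi> b) (deg b - j)\<close> has degree at most \<open>j < min_deg\<close>, hence is
  invariant; its degree-\<open>j\<close> coefficient is
  \<open>(deg b choose j) * lead_coeff (\<phi> b)\<close>, which must therefore vanish.
\<close>
lemma binomial_deg_eq_0:
  assumes "0 < deg b" "0 < j" "j < min_deg"
  shows "of_nat (deg b choose j) = (0::'b)"
proof (rule ccontr)
  assume nz: "of_nat (deg b choose j) \<noteq> (0::'b)"
  have j: "j \<le> deg b" using min_deg_le[OF assms(1)] assms by simp
  define i where "i = deg b - j"
  have i: "i \<le> deg b" "deg b - i = j" using j by (auto simp: i_def)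
  have "lead_coeff (\<phi> b) \<noteq> 0" using assms(1) by auto
  then have "coeff (\<phi> (coeff (\<phi> b) i)) j \<noteq> 0"
    using coeff_apply_coeff_top[OF i(1)] i nz by (simp add: binomial_symmetric[OF j, symmetric] i_def)
  then have "j \<le> deg (coeff (\<phi> b) i)" by (rule le_degree)
  moreover have "deg (coeff (\<phi> b) i) \<le> j" using deg_coeff_le[of b i] i by simp
  ultimately show False using min_deg_le[of "coeff (\<phi> b) i"] assms by simp
qed

lemma min_deg_dvd_deg: "min_deg dvd deg b"
proof (cases "deg b = 0")
  case False
  obtain t where "deg t = min_deg" using min_deg_attained by blast
  then have "\<forall>j. 0 < j \<and> j < min_deg \<longrightarrow> of_nat (min_deg choose j) = (0::'b)"
    using binomial_deg_eq_0[of t] min_deg_pos by auto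
  moreover have "\<forall>j. 0 < j \<and> j < min_deg \<longrightarrow> of_nat (deg b choose j) = (0::'b)"
    using binomial_deg_eq_0[of b] False by auto
  ultimately show ?thesis by (rule dvd_if_binomials_vanish[OF min_deg_pos])
qed simp

end

locale retracted_exp_map = nontrivial_exp_map \<phi> for \<phi> :: "'b::{factorial_semiring,idom} \<Rightarrow> 'b poly" +
  fixes \<pi> :: "'b \<Rightarrow> 'b"
  assumes retraction_hom: "is_ring_hom \<pi>"
    and retraction_idem: "\<pi> \<circ> \<pi> = \<pi>"
    and retraction_range: "range \<pi> = invariants \<phi>"
begin

lemmas retraction_simps = is_ring_homD[OF retraction_hom] is_ring_hom_diff[OF retraction_hom]

lemma retraction_invariant: "\<pi> b \<in> invariants \<phi>"
  using retraction_range by auto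

lemma retraction_fixes_invariant: "a \<in> invariants \<phi> \<Longrightarrow> \<pi> a = a"
  using retraction_range retraction_idem by (metis comp_apply rangeE)

lemma ex_min_deg_in_kernel: "\<exists>t. deg t = min_deg \<and> \<pi> t = 0"
proof -
  obtain r where r: "deg r = min_deg" using min_deg_attained by blast
  have "\<phi> (r - \<pi> r) = \<phi> r + [:- \<pi> r:]"
    using apply_invariant[OF retraction_invariant] by (simp add: hom_simps)
  also have "degree \<dots> = min_deg"
    using r min_deg_pos by (subst degree_add_eq_left) simp_all
  finally show ?thesis
    using retraction_fixes_invariant[OF retraction_invariant]
    by (intro exI[of _ "r - \<pi> r"]) (simp add: retraction_simps)
qed

text \<open>The minimal number of prime factors is what keeps invariant primes from dividing \<open>t\<close>.\<close>
definition t :: 'b where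
  "t = arg_min (\<lambda>s. size (prime_factorization s)) (\<lambda>s. deg s = min_deg \<and> \<pi> s = 0)"

lemma deg_t: "deg t = min_deg" and retraction_t: "\<pi> t = 0"
  and t_fewest_prime_factors:
    "deg s = min_deg \<Longrightarrow> \<pi> s = 0 \<Longrightarrow> size (prime_factorization t) \<le> size (prime_factorization s)"
proof -
  obtain s0 where "deg s0 = min_deg \<and> \<pi> s0 = 0" using ex_min_deg_in_kernel by blast
  from arg_min_nat_lemma[of "\<lambda>s. deg s = min_deg \<and> \<pi> s = 0", OF this,
      of "\<lambda>s. size (prime_factorization s)"]
  show "deg t = min_deg" "\<pi> t = 0"
    "deg s = min_deg \<Longrightarrow> \<pi> s = 0 \<Longrightarrow> size (prime_factorization t) \<le> size (prime_factorization s)"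
    unfolding t_def by auto
qed

lemma apply_t_nonzero: "\<phi> t \<noteq> 0"
  using deg_t min_deg_pos by auto

lemma t_nonzero: "t \<noteq> 0"
  using apply_t_nonzero by (simp add: eq_0_iff)

lemma invariant_prime_not_dvd_t:
  assumes p: "prime p" "p \<in> invariants \<phi>"
  shows "\<not> p dvd t"
proof
  assume "p dvd t"
  then obtain s where s: "t = p * s" by (rule dvdE)
  have nz: "p \<noteq> 0" "s \<noteq> 0" using p t_nonzero s by auto
  have "deg s = min_deg" using deg_mult[OF nz] s deg_t p by (simp add: invariant_iff_deg_0)
  moreover have "\<pi> s = 0"
    using retraction_t s nz retraction_fixes_invariant[OF p(2)] by (simp add: retraction_simps)
  ultimately have "size (prime_factorization t) \<le> size (prime_factorization s)"
    by (rule t_fewest_prime_factors)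
  moreover have "prime_factorization t = {#p#} + prime_factorization s"
    using s prime_factorization_mult[OF nz] prime_factorization_prime[OF p(1)] by simp
  ultimately show False by simp
qed

lemma prime_dvd_poly_t:
  assumes p: "prime p" "p \<in> invariants \<phi>"
  shows "g \<in> polys_over (invariants \<phi>) \<Longrightarrow> p dvd poly g t \<Longrightarrow>
         \<exists>g'\<in>polys_over (invariants \<phi>). g = smult p g'"
proof (induction g)
  case 0
  then show ?case by (intro bexI[of _ 0]) (auto simp: polys_over_def)
next
  case (pCons a g)
  have a: "a \<in> invariants \<phi>" and g: "g \<in> polys_over (invariants \<phi>)"
    using pCons.prems(1) by (auto simp: polys_over_pCons_iff)
  obtain y where y: "a + t * poly g t = p * y" using pCons.prems(2) unfolding poly_pCons by (rule dvdE)
  have a_eq: "a = p * \<pi> y"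
    using arg_cong[OF y, of \<pi>] retraction_fixes_invariant[OF a] retraction_fixes_invariant[OF p(2)]
      retraction_t by (simp add: retraction_simps)
  with y have "t * poly g t = p * (y - \<pi> y)" by (simp add: algebra_simps)
  then have "p dvd poly g t"
    using invariant_prime_not_dvd_t[OF p] prime_dvd_mult_iff[OF p(1)] by (metis dvd_triv_left)
  then obtain g' where "g' \<in> polys_over (invariants \<phi>)" "g = smult p g'"
    using pCons.IH g by blast
  then show ?case
    using a_eq retraction_invariant
    by (intro bexI[of _ "pCons (\<pi> y) g'"]) (simp_all add: polys_over_pCons_iff)
qed

text \<open>
  Induction on \<open>deg b\<close>: with \<open>deg b = min_deg * m\<close>, the element
  \<open>lead_coeff (\<phi> t) ^ m * b - lead_coeff (\<phi> b) * t ^ m\<close> has smaller degree.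
\<close>
lemma nonzero_multiple_in_span:
  "\<exists>a\<in>invariants \<phi>. a \<noteq> 0 \<and> (\<exists>p\<in>polys_over (invariants \<phi>). a * b = poly p t)"
proof (induction "deg b" arbitrary: b rule: less_induct)
  case less
  note sub = subring_invariants
  show ?case
  proof (cases "deg b = 0")
    case True
    then show ?thesis
      using sub const_in_polys_over[OF sub, of b]
      by (intro bexI[of _ 1] conjI bexI[of _ "[:b:]"]) (auto simp: invariant_iff_deg_0 is_subring_def)
  next
    case False
    obtain m where m: "deg b = min_deg * m" using min_deg_dvd_deg by (rule dvdE)
    define c where "c = lead_coeff (\<phi> t)"
    define L where "L = lead_coeff (\<phi> b)"
    have c: "c \<in> invariants \<phi>" "c \<noteq> 0"
      using lead_coeff_invariant apply_t_nonzero by (auto simp: c_def)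
    have L: "L \<in> invariants \<phi>" using lead_coeff_invariant by (simp add: L_def)
    define x where "x = c ^ m * b - L * t ^ m"
    have phi_x: "\<phi> x = smult (c ^ m) (\<phi> b) - smult L (\<phi> t ^ m)"
      using apply_invariant[OF invariant_power[OF c(1)]] apply_invariant[OF L]
      by (simp add: x_def hom_simps)
    have deg_tm: "degree (\<phi> t ^ m) = deg b"
      using degree_power_eq[OF apply_t_nonzero, of m] deg_t m by (simp add: mult.commute)
    have "degree (\<phi> x) \<le> deg b"
      unfolding phi_x using deg_tm by (intro degree_diff_le) simp_all
    moreover have "coeff (\<phi> x) (deg b) = 0"
      using deg_tm lead_coeff_power[of "\<phi> t" m] by (simp add: phi_x c_def L_def)
    ultimately have "deg x < deg b"
      using False by (metis le_neq_implies_less leading_coeff_0_iff degree_0)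
    then obtain a q where a: "a \<in> invariants \<phi>" "a \<noteq> 0"
      and q: "q \<in> polys_over (invariants \<phi>)" "a * x = poly q t"
      using less by blast
    have "(a * c ^ m) * b = poly (q + monom (a * L) m) t"
      using q(2) by (simp add: x_def poly_monom algebra_simps)
    moreover have "a * c ^ m \<in> invariants \<phi>" "a * c ^ m \<noteq> 0"
      using a c sub invariant_power by (auto simp: is_subring_def)
    moreover have "q + monom (a * L) m \<in> polys_over (invariants \<phi>)"
      using a L sub by (intro polys_over_add monom_in_polys_over q) (auto simp: is_subring_def)
    ultimately show ?thesis by blast
  qed
qed

text \<open>Invariants are closed under factors, so every prime factor of \<open>a\<close> is invariant.\<close>
lemma cancel_invariant_factor:
  "a \<in> invariants \<phi> \<Longrightarrow> a \<noteq> 0 \<Longrightarrow> p \<in> polys_over (invariants \<phi>) \<Longrightarrow> a * b = poly p t \<Longrightarrow>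
   \<exists>q\<in>polys_over (invariants \<phi>). b = poly q t"
proof (induction "size (prime_factorization a)" arbitrary: a p rule: less_induct)
  case less
  show ?case
  proof (cases "is_unit a")
    case True
    then obtain x where x: "1 = a * x" by (rule dvdE)
    then have "x \<in> invariants \<phi>"
      using invariant_factor[of x a] subring_invariants by (simp add: mult.commute is_subring_def)
    moreover have "b = poly (smult x p) t"
      using x less.prems(4) by (metis mult.assoc mult.commute mult_1 poly_smult)
    ultimately show ?thesis
      using smult_in_polys_over[OF subring_invariants _ less.prems(3)] by blast
  next
    case False
    obtain q where q: "q dvd a" "prime q" using prime_divisor_exists[OF less.prems(2) False] by blast
    obtain a' where a': "a = q * a'" using q(1) by (rule dvdE)
    have nz: "q \<noteq> 0" "a' \<noteq> 0" using a' less.prems(2) by auto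
    have q_inv: "q \<in> invariants \<phi>" and a'_inv: "a' \<in> invariants \<phi>"
      using invariant_factor[of q a'] invariant_factor[of a' q] a' less.prems
      by (simp_all add: mult.commute)
    have "q dvd poly p t" using less.prems(4) a' by (metis dvd_triv_left mult.assoc)
    then obtain p' where p': "p' \<in> polys_over (invariants \<phi>)" "p = smult q p'"
      using prime_dvd_poly_t[OF q(2) q_inv less.prems(3)] by blast
    have "a' * b = poly p' t" using less.prems(4) a' p' nz by (simp add: mult.assoc)
    moreover have "size (prime_factorization a') < size (prime_factorization a)"
      using a' prime_factorization_mult[OF nz] prime_factorization_prime[OF q(2)] by simp
    ultimately show ?thesis using less.hyps a'_inv nz p' by blast
  qed
qed

lemma t_transcendental: "p \<in> polys_over (invariants \<phi>) \<Longrightarrow> p \<noteq> 0 \<Longrightarrow> poly p t \<noteq> 0"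
proof (induction p)
  case (pCons a g)
  have a: "a \<in> invariants \<phi>" and g: "g \<in> polys_over (invariants \<phi>)"
    using pCons.prems(1) by (auto simp: polys_over_pCons_iff)
  show ?case
  proof (cases "g = 0")
    case False
    then have "\<phi> (poly g t) \<noteq> 0" using pCons.IH g by (simp add: eq_0_iff)
    then have "0 < degree (\<phi> t * \<phi> (poly g t))"
      using degree_mult_eq[OF apply_t_nonzero] deg_t min_deg_pos by simp
    moreover have "\<phi> (poly (pCons a g) t) = [:a:] + \<phi> t * \<phi> (poly g t)"
      using apply_invariant[OF a] by (simp add: hom_simps)
    ultimately have "0 < deg (poly (pCons a g) t)" by (simp add: degree_add_eq_right)
    then show ?thesis by (metis degree_0 less_irrefl eq_0_iff)
  qed (use pCons.prems in simp)
qed simp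

lemma poly_ring_in_one_var_over_invariants: "is_poly_ring_in_one_var_over (invariants \<phi>)"
  unfolding is_poly_ring_in_one_var_over_def
  using nonzero_multiple_in_span cancel_invariant_factor t_transcendental by metis

end

subsection \<open>Polynomial rings in one variable\<close>

locale poly_ring_in_one_var =
  fixes A :: "'b::comm_ring_1 set" and T :: 'b
  assumes subring: "is_subring A"
    and generates: "\<And>b. \<exists>p\<in>polys_over A. b = poly p T"
    and transcendental: "\<And>p. p \<in> polys_over A \<Longrightarrow> poly p T = 0 \<Longrightarrow> p = 0"
begin

definition to_poly :: "'b \<Rightarrow> 'b poly" where
  "to_poly b = (THE p. p \<in> polys_over A \<and> b = poly p T)"

lemma to_poly: "to_poly b \<in> polys_over A" "poly (to_poly b) T = b"
proof -
  have "\<exists>!p. p \<in> polys_over A \<and> b = poly p T"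
    using generates[of b] transcendental[OF polys_over_diff[OF subring]] by force
  then show "to_poly b \<in> polys_over A" "poly (to_poly b) T = b"
    unfolding to_poly_def by (metis (mono_tags, lifting) theI')+
qed

lemma to_poly_poly: "p \<in> polys_over A \<Longrightarrow> to_poly (poly p T) = p"
  using transcendental[OF polys_over_diff[OF subring]] to_poly by (metis eq_iff_diff_eq_0 poly_diff)

lemma to_poly_add: "to_poly (x + y) = to_poly x + to_poly y"
  using to_poly_poly[OF polys_over_add[OF subring to_poly(1) to_poly(1)]] by (simp add: to_poly(2))

lemma to_poly_mult: "to_poly (x * y) = to_poly x * to_poly y"
  using to_poly_poly[OF polys_over_mult[OF subring to_poly(1) to_poly(1)]] by (simp add: to_poly(2))

lemma to_poly_const: "a \<in> A \<Longrightarrow> to_poly a = [:a:]"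
  using to_poly_poly[OF const_in_polys_over[OF subring]] by fastforce

lemma to_poly_0: "to_poly 0 = 0" and to_poly_1: "to_poly 1 = 1"
  using subring to_poly_const[of 0] to_poly_const[of 1] by (simp_all add: is_subring_def one_pCons)

lemma to_poly_T: "to_poly T = [:0, 1:]"
proof -
  have "[:0, 1:] \<in> polys_over A"
    using subring by (auto simp: polys_over_def coeff_pCons is_subring_def split: nat.splits)
  from to_poly_poly[OF this] show ?thesis by simp
qed

definition retraction :: "'b \<Rightarrow> 'b" where "retraction b = coeff (to_poly b) 0"

lemma retraction_in: "retraction b \<in> A"
  using to_poly(1) by (simp add: retraction_def coeff_in_polys_over)

lemma retraction_fixes: "a \<in> A \<Longrightarrow> retraction a = a"
  by (simp add: retraction_def to_poly_const)

lemma is_retract: "is_retract A"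
  unfolding is_retract_def
proof (intro exI[of _ retraction] conjI)
  show "is_ring_hom retraction"
    unfolding is_ring_hom_def retraction_def
    by (simp add: to_poly_0 to_poly_1 to_poly_add to_poly_mult coeff_mult_0)
  show "retraction \<circ> retraction = retraction"
    using retraction_fixes[OF retraction_in] by auto
  show "range retraction = A"
    using retraction_in retraction_fixes by (metis image_subsetI rangeI subsetI subset_antisym)
qed

definition translation :: "'b \<Rightarrow> 'b poly" where
  "translation b = pcompose (to_poly b) [:T, 1:]"

lemma translation_hom: "is_ring_hom translation"
  unfolding is_ring_hom_def translation_def
  by (simp add: to_poly_0 to_poly_1 to_poly_add to_poly_mult pcompose_add pcompose_mult pcompose_1)

lemma translation_const: "a \<in> A \<Longrightarrow> translation a = [:a:]"
  by (simp add: translation_def to_poly_const)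

lemma translation_T: "translation T = [:T, 1:]"
  by (simp add: translation_def to_poly_T pcompose_pCons)

lemma map_translation_to_poly: "map_poly translation (to_poly b) = map_poly (\<lambda>c. [:c:]) (to_poly b)"
proof (rule map_poly_cong)
  fix x assume "x \<in> set (coeffs (to_poly b))"
  then have "x \<in> range (coeff (to_poly b))" by (simp add: range_coeff)
  then have "x \<in> A"
    using to_poly(1)[of b] by (auto simp: polys_over_def)
  then show "translation x = [:x:]" by (rule translation_const)
qed

text \<open>Both sides are \<open>to_poly b\<close> evaluated at \<open>T + V + U\<close>.\<close>
lemma translation_composition:
  "map_poly translation (translation b) =
     poly (map_poly (\<lambda>c. [:[:c:]:]) (translation b)) [:[:0, 1:], 1:]"
proof -
  let ?C = "map_poly (\<lambda>c::'b. [:c:])"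
  have C: "is_ring_hom (\<lambda>c::'b. [:c:])" by (rule is_ring_hom_const_poly)
  have "map_poly translation (translation b) =
      pcompose (map_poly translation (to_poly b)) (map_poly translation [:T, 1:])"
    by (subst translation_def) (rule map_poly_pcompose_hom[OF translation_hom])
  also have "map_poly translation [:T, 1:] = [:[:T, 1:], 1:]"
    using is_ring_homD[OF translation_hom] by (simp add: map_poly_pCons translation_T one_pCons)
  finally have lhs: "map_poly translation (translation b) = pcompose (?C (to_poly b)) [:[:T, 1:], 1:]"
    by (simp add: map_translation_to_poly)
  have "poly (map_poly (\<lambda>c. [:[:c:]:]) (translation b)) [:[:0, 1:], 1:] =
        pcompose (?C (translation b)) [:[:0, 1:], 1:]"
    by (simp add: pcompose_altdef map_poly_map_poly comp_def)
  also have "?C (translation b) = pcompose (?C (to_poly b)) (?C [:T, 1:])"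
    by (subst translation_def) (rule map_poly_pcompose_hom[OF C])
  also have "?C [:T, 1:] = [:[:T:], 1:]"
    by (simp add: map_poly_pCons one_pCons)
  also have "pcompose (pcompose (?C (to_poly b)) [:[:T:], 1:]) [:[:0, 1:], 1:] =
             pcompose (?C (to_poly b)) (pcompose [:[:T:], 1:] [:[:0, 1:], 1:])"
    by (rule pcompose_assoc[symmetric])
  also have "pcompose [:[:T:], 1:] [:[:0, 1:], 1:] = [:[:T, 1:], 1:]"
    by (simp add: pcompose_pCons one_pCons)
  finally show ?thesis by (simp add: lhs)
qed

lemma invariants_translation: "invariants translation = A"
proof (intro set_eqI iffI)
  fix b assume "b \<in> invariants translation"
  then have "pcompose (to_poly b) [:T, 1:] = [:b:]" by (simp add: invariants_def translation_def)
  then have "pcompose (pcompose (to_poly b) [:T, 1:]) [:- T, 1:] = [:b:]" by simp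
  then have "to_poly b = [:b:]" by (simp add: pcompose_assoc[symmetric] pcompose_pCons)
  then show "b \<in> A" using coeff_in_polys_over[OF to_poly(1), of b 0] by simp
qed (simp add: invariants_def translation_const)

lemma translation_in_exp_maps: "translation \<in> exp_maps A"
proof -
  have "poly (translation b) 0 = b" for b
    using to_poly(2)[of b] by (simp add: translation_def poly_pcompose)
  then show ?thesis
    unfolding exp_maps_def using translation_hom translation_const translation_composition by blast
qed

lemma translation_nontrivial: "translation \<noteq> (\<lambda>b. [:b:])"
  using translation_T by (metis pCons_eq_iff zero_neq_one pCons_0_0)

end

theorem proposition4p2:
  fixes A :: "'b::{factorial_semiring, idom} set"
  assumes "is_subring A"
  shows "(is_retract A \<and>
            (\<exists>\<phi>\<in>exp_maps A. \<phi> \<noteq> (\<lambda>b. [:b:]) \<and> A = invariants \<phi>))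
         \<longleftrightarrow> is_poly_ring_in_one_var_over A"
proof
  assume "is_retract A \<and> (\<exists>\<phi>\<in>exp_maps A. \<phi> \<noteq> (\<lambda>b. [:b:]) \<and> A = invariants \<phi>)"
  then obtain \<pi> \<phi> where "is_ring_hom \<pi>" "\<pi> \<circ> \<pi> = \<pi>" "range \<pi> = A"
    and "\<phi> \<in> exp_maps A" "\<phi> \<noteq> (\<lambda>b. [:b:])" and A: "A = invariants \<phi>"
    unfolding is_retract_def by blast
  then interpret retracted_exp_map \<phi> \<pi>
    unfolding exp_maps_def by unfold_locales auto
  show "is_poly_ring_in_one_var_over A"
    using poly_ring_in_one_var_over_invariants A by simp
next
  assume "is_poly_ring_in_one_var_over A"
  then obtain T where "\<forall>b. \<exists>p\<in>polys_over A. b = poly p T"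
      "\<forall>p\<in>polys_over A. poly p T = 0 \<longrightarrow> p = 0"
    unfolding is_poly_ring_in_one_var_over_def by blast
  with assms interpret poly_ring_in_one_var A T
    by unfold_locales auto
  show "is_retract A \<and> (\<exists>\<phi>\<in>exp_maps A. \<phi> \<noteq> (\<lambda>b. [:b:]) \<and> A = invariants \<phi>)"
    using is_retract translation_in_exp_maps translation_nontrivial invariants_translation by blast
qed

end
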